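(* Let $n\ge4$ be even and let $\mathcal{S}_n$ be the regular $n$-gon state space. Then every pair of compatible dichotomic measurements $\mathsf{M}^{(1)},\mathsf{M}^{(2)}$ on $\mathcal{S}_n$ satisfies $\bar P(\mathsf{M}^{(1)},\mathsf{M}^{(2)})\le\frac34$, and there is a compatible pair attaining $\frac34$.
   Context: The regular $n$-gon state space $\mathcal{S}_n\subset\mathbb{R}^3$ is the convex hull of $s_j=(r_n\cos(2j\pi/n),\,r_n\sin(2j\pi/n),\,1)^T$, $j=1,\ldots,n$, with $r_n=\sqrt{\sec(\pi/n)}$. Effects are linear functionals $e$ on $\mathbb{R}^3$ with $0\le e\le1$ on $\mathcal{S}_n$; unit effect $u=(0,0,1)$; $\|f\|=\max_{s\in\mathcal{S}_n}|f(s)|$. A dichotomic measurement is a pair of effects $\mathsf{M}_+,\mathsf{M}_-$ with $\mathsf{M}_++\mathsf{M}_-=u$. Two dichotomic measurements are compatible if there exist effects $\mathsf{J}_{x,y}$, $x,y\in\{+,-\}$, summing to $u$ with $\sum_y\mathsf{J}_{x,y}=\mathsf{M}^{(1)}_x$ and $\sum_x\mathsf{J}_{x,y}=\mathsf{M}^{(2)}_y$. $\bar P(\mathsf{M}^{(1)},\mathsf{M}^{(2)})=\frac18\sum_{x,y\in\{+,-\}}\|\mathsf{M}^{(1)}_x+\mathsf{M}^{(2)}_y\|$. *)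

theory Defs
  imports "HOL-Analysis.Analysis"
begin

text \<open>Regular n-gon state space in R^3. Linear functionals on R^3 are represented
  by vectors f, acting as s \<mapsto> f \<bullet> s.\<close>

definition r_poly :: "nat \<Rightarrow> real" where
  "r_poly n = sqrt (1 / cos (pi / real n))"

definition vertex :: "nat \<Rightarrow> nat \<Rightarrow> real^3" where
  "vertex n j = vector [r_poly n * cos (2 * real j * pi / real n),
                        r_poly n * sin (2 * real j * pi / real n), 1]"

definition state_space :: "nat \<Rightarrow> (real^3) set" where
  "state_space n = convex hull {vertex n j | j. j \<in> {1..n}}"

definition unit_effect :: "real^3" where
  "unit_effect = vector [0, 0, 1]"

definition is_effect :: "nat \<Rightarrow> real^3 \<Rightarrow> bool" where
  "is_effect n e \<longleftrightarrow> (\<forall>s\<in>state_space n. 0 \<le> e \<bullet> s \<and> e \<bullet> s \<le> 1)"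

definition fnorm :: "nat \<Rightarrow> real^3 \<Rightarrow> real" where
  "fnorm n f = (SUP s\<in>state_space n. \<bar>f \<bullet> s\<bar>)"

text \<open>A dichotomic measurement: outcomes True (= +) and False (= -).\<close>
definition dichotomic :: "nat \<Rightarrow> (bool \<Rightarrow> real^3) \<Rightarrow> bool" where
  "dichotomic n M \<longleftrightarrow> is_effect n (M True) \<and> is_effect n (M False)
                        \<and> M True + M False = unit_effect"

definition compatible :: "nat \<Rightarrow> (bool \<Rightarrow> real^3) \<Rightarrow> (bool \<Rightarrow> real^3) \<Rightarrow> bool" where
  "compatible n M1 M2 \<longleftrightarrow> (\<exists>J :: bool \<Rightarrow> bool \<Rightarrow> real^3.
      (\<forall>x y. is_effect n (J x y)) \<and>
      (\<Sum>x\<in>UNIV. \<Sum>y\<in>UNIV. J x y) = unit_effect \<and>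
      (\<forall>x. (\<Sum>y\<in>UNIV. J x y) = M1 x) \<and>
      (\<forall>y. (\<Sum>x\<in>UNIV. J x y) = M2 y))"

definition Pbar :: "nat \<Rightarrow> (bool \<Rightarrow> real^3) \<Rightarrow> (bool \<Rightarrow> real^3) \<Rightarrow> real" where
  "Pbar n M1 M2 = (1/8) * (\<Sum>x\<in>UNIV. \<Sum>y\<in>UNIV. fnorm n (M1 x + M2 y))"

end

theory Submission
  imports Defs
begin

text \<open>For even n the polygon S_n is point symmetric about its centre c = (0,0,1), which is
  also the vector representing u; hence every effect satisfies e(s) \<le> 2 e(c).
  If J is a joint measurement, then M1_x + M2_y = u + J_xy - J_(\<not>x)(\<not>y), whose value at a
  state s lies between 0 and 1 + J_xy(s) \<le> 1 + 2 J_xy(c). Summing over the four outcome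
  pairs and using \<Sum> J_xy(c) = u(c) = 1 bounds the sum of the norms by 6.
  The bound is attained by the measurement (e, u - e) paired with itself, where
  e = (1 + x/r_n)/2 takes the values 1 and 0 at two opposite vertices.\<close>

lemma inner_vector_3:
  "(vector [a, b, c] :: real^3) \<bullet> vector [x, y, z] = a * x + b * y + c * z"
  by (simp add: inner_vec_def sum_3)

lemma vertex_in_state_space: "j \<in> {1..n} \<Longrightarrow> vertex n j \<in> state_space n"
  unfolding state_space_def by (rule hull_inc) blast

lemma state_space_subsetI:
  assumes "convex T" and "\<And>j. j \<in> {1..n} \<Longrightarrow> vertex n j \<in> T"
  shows "state_space n \<subseteq> T"
  unfolding state_space_def using assms by (intro hull_minimal) auto

lemma state_space_nonempty: "0 < n \<Longrightarrow> state_space n \<noteq> {}"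
  using vertex_in_state_space[of n n] by auto

lemma unit_effect_state:
  assumes "s \<in> state_space n"
  shows "unit_effect \<bullet> s = 1"
proof -
  have "state_space n \<subseteq> {v. unit_effect \<bullet> v = 1}"
    by (rule state_space_subsetI)
      (auto simp: convex_hyperplane vertex_def unit_effect_def inner_vector_3)
  then show ?thesis using assms by auto
qed

lemma vertex_antipodal:
  assumes "even n" and "0 < n"
  shows "vertex n (j + n div 2) = 2 *\<^sub>R unit_effect - vertex n j"
proof -
  have "2 * real (j + n div 2) * pi / real n = 2 * real j * pi / real n + pi"
    using assms by (auto simp: field_simps elim!: evenE)
  then show ?thesis
    by (simp add: vertex_def unit_effect_def vec_eq_iff forall_3
        cos_periodic_pi sin_periodic_pi)
qed

lemma antipode_of_vertex:
  assumes "even n" and "j \<in> {1..n}"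
  shows "2 *\<^sub>R unit_effect - vertex n j \<in> {vertex n i | i. i \<in> {1..n}}"
proof (cases "j \<le> n div 2")
  case True
  then have "j + n div 2 \<in> {1..n}" using assms by auto
  moreover have "2 *\<^sub>R unit_effect - vertex n j = vertex n (j + n div 2)"
    using vertex_antipodal[of n j] assms by simp
  ultimately show ?thesis by blast
next
  case False
  then have "j - n div 2 \<in> {1..n}" "j - n div 2 + n div 2 = j" using assms by auto
  then show ?thesis using vertex_antipodal[of n "j - n div 2"] assms by force
qed

lemma state_space_point_symmetric:
  assumes "even n" and "s \<in> state_space n"
  shows "2 *\<^sub>R unit_effect - s \<in> state_space n"
proof -
  define \<rho> where "\<rho> v = 2 *\<^sub>R unit_effect + (-1) *\<^sub>R v" for v :: "real^3"
  let ?V = "{vertex n j | j. j \<in> {1..n}}"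
  have "\<rho> ` state_space n = convex hull (\<rho> ` ?V)"
    unfolding state_space_def \<rho>_def by (rule convex_hull_affinity[symmetric])
  also have "\<dots> \<subseteq> state_space n"
    unfolding state_space_def using antipode_of_vertex[OF assms(1)]
    by (intro hull_mono) (auto simp: \<rho>_def)
  finally show ?thesis using assms(2) by (auto simp: \<rho>_def)
qed

lemma effect_le_twice_centre:
  assumes "even n" and "is_effect n e" and "s \<in> state_space n"
  shows "e \<bullet> s \<le> 2 * (e \<bullet> unit_effect)"
proof -
  have "0 \<le> e \<bullet> (2 *\<^sub>R unit_effect - s)"
    using assms state_space_point_symmetric unfolding is_effect_def by blast
  then show ?thesis by (simp add: inner_diff_right)
qed

lemma fnorm_le:
  assumes "state_space n \<noteq> {}" and "\<And>s. s \<in> state_space n \<Longrightarrow> \<bar>f \<bullet> s\<bar> \<le> K"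
  shows "fnorm n f \<le> K"
  unfolding fnorm_def using assms by (intro cSUP_least) auto

lemma fnorm_eqI:
  assumes "\<And>s. s \<in> state_space n \<Longrightarrow> \<bar>f \<bullet> s\<bar> \<le> K"
    and "s0 \<in> state_space n" and "\<bar>f \<bullet> s0\<bar> = K"
  shows "fnorm n f = K"
proof (rule antisym)
  show "fnorm n f \<le> K" using assms by (intro fnorm_le) auto
  have "bdd_above ((\<lambda>s. \<bar>f \<bullet> s\<bar>) ` state_space n)"
    using assms(1) by (intro bdd_aboveI2) auto
  then show "K \<le> fnorm n f"
    unfolding fnorm_def using assms(2,3) by (intro cSUP_upper2[of _ _ s0]) auto
qed

lemma marginal_sum_eq:
  fixes J :: "bool \<Rightarrow> bool \<Rightarrow> 'a::ab_group_add"
  assumes "(\<Sum>x\<in>UNIV. \<Sum>y\<in>UNIV. J x y) = u"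
    and "\<And>x. (\<Sum>y\<in>UNIV. J x y) = M1 x" and "\<And>y. (\<Sum>x\<in>UNIV. J x y) = M2 y"
  shows "M1 x + M2 y = u + J x y - J (\<not> x) (\<not> y)"
  unfolding assms(1,2,3)[symmetric]
  by (cases x; cases y) (simp_all add: UNIV_bool algebra_simps)

lemma fnorm_unit_effect_add_diff_le:
  assumes "even n" and "0 < n" and "is_effect n P" and "is_effect n Q"
  shows "fnorm n (unit_effect + P - Q) \<le> 1 + 2 * (P \<bullet> unit_effect)"
proof (rule fnorm_le)
  show "state_space n \<noteq> {}" using assms(2) by (rule state_space_nonempty)
next
  fix s assume s: "s \<in> state_space n"
  have "(unit_effect + P - Q) \<bullet> s = 1 + P \<bullet> s - Q \<bullet> s"
    using unit_effect_state[OF s] by (simp add: inner_diff_left inner_add_left)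
  moreover have "0 \<le> P \<bullet> s" "0 \<le> Q \<bullet> s" "Q \<bullet> s \<le> 1"
    using assms(3,4) s unfolding is_effect_def by auto
  moreover have "P \<bullet> s \<le> 2 * (P \<bullet> unit_effect)"
    using assms(1,3) s by (rule effect_le_twice_centre)
  ultimately show "\<bar>(unit_effect + P - Q) \<bullet> s\<bar> \<le> 1 + 2 * (P \<bullet> unit_effect)"
    by simp
qed

lemma Pbar_compatible_le:
  assumes "even n" and "0 < n" and "compatible n M1 M2"
  shows "Pbar n M1 M2 \<le> 3/4"
proof -
  obtain J where eff: "\<And>x y. is_effect n (J x y)"
    and total: "(\<Sum>x\<in>UNIV. \<Sum>y\<in>UNIV. J x y) = unit_effect"
    and "\<And>x. (\<Sum>y\<in>UNIV. J x y) = M1 x" and "\<And>y. (\<Sum>x\<in>UNIV. J x y) = M2 y"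
    using assms(3) unfolding compatible_def by blast
  then have M: "M1 x + M2 y = unit_effect + J x y - J (\<not> x) (\<not> y)" for x y
    by (intro marginal_sum_eq)
  have "Pbar n M1 M2 \<le> (1/8) * (\<Sum>x\<in>UNIV. \<Sum>y\<in>UNIV. 1 + 2 * (J x y \<bullet> unit_effect))"
    unfolding Pbar_def M
    using fnorm_unit_effect_add_diff_le[OF assms(1,2) eff eff]
    by (intro mult_left_mono sum_mono) auto
  also have "\<dots> = (1/8) * (4 + 2 * ((\<Sum>x\<in>UNIV. \<Sum>y\<in>UNIV. J x y) \<bullet> unit_effect))"
    by (simp add: sum.distrib inner_sum_left sum_distrib_left)
  also have "\<dots> = 3/4"
    by (simp add: total unit_effect_def inner_vector_3)
  finally show ?thesis .
qed

definition effect_measurement :: "real^3 \<Rightarrow> bool \<Rightarrow> real^3" where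
  "effect_measurement e = (\<lambda>b. if b then e else unit_effect - e)"

lemma dichotomic_effect_measurement:
  assumes "is_effect n e"
  shows "dichotomic n (effect_measurement e)"
  using assms unit_effect_state
  by (auto simp: dichotomic_def effect_measurement_def is_effect_def inner_diff_left)

lemma compatible_self:
  assumes "dichotomic n M"
  shows "compatible n M M"
  unfolding compatible_def
proof (intro exI[of _ "\<lambda>x y. if x = y then M x else 0"] conjI allI)
  show "is_effect n (if x = y then M x else 0)" for x y
    using assms by (auto simp: dichotomic_def is_effect_def)
qed (use assms in \<open>auto simp: UNIV_bool dichotomic_def add.commute\<close>)

lemma Pbar_effect_measurement_self:
  assumes "is_effect n e"
    and "s1 \<in> state_space n" "e \<bullet> s1 = 1" and "s0 \<in> state_space n" "e \<bullet> s0 = 0"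
  shows "Pbar n (effect_measurement e) (effect_measurement e) = 3/4"
proof -
  have e: "0 \<le> e \<bullet> s" "e \<bullet> s \<le> 1" "unit_effect \<bullet> s = 1" if "s \<in> state_space n" for s
    using assms(1) that unit_effect_state unfolding is_effect_def by auto
  have "fnorm n (e + e) = 2"
    using e assms(2,3) by (intro fnorm_eqI[of _ _ _ s1]) (unfold inner_add_left, auto)
  moreover have "fnorm n ((unit_effect - e) + (unit_effect - e)) = 2"
    using e assms(4,5)
    by (intro fnorm_eqI[of _ _ _ s0]) (unfold inner_add_left inner_diff_left, auto)
  moreover have "fnorm n unit_effect = 1"
    using e assms(2) by (intro fnorm_eqI[of _ _ _ s1]) auto
  ultimately show ?thesis
    by (simp add: Pbar_def effect_measurement_def UNIV_bool)
qed

definition axis_effect :: "nat \<Rightarrow> real^3" where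
  "axis_effect n = vector [1 / (2 * r_poly n), 0, 1/2]"

lemma r_poly_pos:
  assumes "2 < n"
  shows "0 < r_poly n"
proof -
  have "pi / real n < pi / 2"
    using assms by (intro divide_strict_left_mono) auto
  moreover have "0 < pi / real n" using assms by simp
  ultimately have "0 < cos (pi / real n)" by (intro cos_gt_zero_pi) auto
  then show ?thesis unfolding r_poly_def by simp
qed

lemma axis_effect_vertex:
  assumes "2 < n"
  shows "axis_effect n \<bullet> vertex n j = (1 + cos (2 * real j * pi / real n)) / 2"
  using r_poly_pos[OF assms]
  by (simp add: axis_effect_def vertex_def inner_vector_3 add_divide_distrib)

lemma is_effect_axis_effect:
  assumes "2 < n"
  shows "is_effect n (axis_effect n)"
proof -
  have "state_space n \<subseteq> {v. 0 \<le> axis_effect n \<bullet> v} \<inter> {v. axis_effect n \<bullet> v \<le> 1}"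
  proof (rule state_space_subsetI)
    show "convex ({v. 0 \<le> axis_effect n \<bullet> v} \<inter> {v. axis_effect n \<bullet> v \<le> 1})"
      by (intro convex_Int convex_halfspace_le convex_halfspace_ge)
    fix j
    have "0 \<le> 1 + cos (2 * real j * pi / real n)" "1 + cos (2 * real j * pi / real n) \<le> 2"
      using cos_ge_minus_one cos_le_one by (smt (verit))+
    then show "vertex n j \<in> {v. 0 \<le> axis_effect n \<bullet> v} \<inter> {v. axis_effect n \<bullet> v \<le> 1}"
      by (simp add: axis_effect_vertex[OF assms])
  qed
  then show ?thesis unfolding is_effect_def by auto
qed

lemma axis_effect_vertex_last:
  assumes "2 < n"
  shows "axis_effect n \<bullet> vertex n n = 1"
  using assms by (simp add: axis_effect_vertex)

lemma axis_effect_vertex_opposite: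
  assumes "even n" and "2 < n"
  shows "axis_effect n \<bullet> vertex n (n div 2) = 0"
proof -
  have "2 * real (n div 2) * pi / real n = pi"
    using assms by (auto elim!: evenE)
  then show ?thesis using assms by (simp add: axis_effect_vertex)
qed

theorem mainTheorem12:
  fixes n :: nat
  assumes "n \<ge> 4" and "even n"
  shows "(\<forall>M1 M2. dichotomic n M1 \<and> dichotomic n M2 \<and> compatible n M1 M2
            \<longrightarrow> Pbar n M1 M2 \<le> 3/4)
       \<and> (\<exists>M1 M2. dichotomic n M1 \<and> dichotomic n M2 \<and> compatible n M1 M2
            \<and> Pbar n M1 M2 = 3/4)"
proof -
  have n: "0 < n" "2 < n" using assms(1) by auto
  let ?M = "effect_measurement (axis_effect n)"
  have "dichotomic n ?M"
    using is_effect_axis_effect[OF n(2)] by (rule dichotomic_effect_measurement)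
  moreover have "Pbar n ?M ?M = 3/4"
  proof (rule Pbar_effect_measurement_self[OF is_effect_axis_effect[OF n(2)]])
    show "vertex n n \<in> state_space n" "vertex n (n div 2) \<in> state_space n"
      using n by (auto intro: vertex_in_state_space)
  qed (use assms n in \<open>simp_all add: axis_effect_vertex_last axis_effect_vertex_opposite\<close>)
  ultimately show ?thesis
    using Pbar_compatible_le[OF assms(2) n(1)] compatible_self by blast
qed

end
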